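(* Let $q>2$ be a prime power and $k\ge 3$ an integer. Then there exists a linear AOA$(1,k-1,k,q)$.
   Context: An orthogonal array OA$(t,k,v)$ (with $1\le t\le k$) is a $v^t\times k$ array with entries from a set $X$ of size $v$ such that, for every choice of $t$ of its columns, each $t$-tuple in $X^t$ appears exactly once as a row of the corresponding $v^t\times t$ subarray. For integers $1\le s\le t\le k$, an augmented orthogonal array AOA$(s,t,k,v)$ is a $v^t\times(k+1)$ array $A$ such that: (1) the first $k$ columns of $A$ form an OA$(t,k,v)$ on a symbol set $X$ of size $v$; (2) the last column of $A$ has entries from a set $Y$ of size $v^{t-s}$; (3) for any choice of $s$ of the first $k$ columns, these $s$ columns together with the last column contain every $(s+1)$-tuple of $X^s\times Y$ exactly once as a row. For a prime power $q$, an AOA$(s,t,k,q)$ is linear if $X=\mathbb{F}_q$, $Y=\mathbb{F}_q^{t-s}$, and its set of rows, regarded as vectors in $\mathbb{F}_q^{k}\times\mathbb{F}_q^{t-s}=\mathbb{F}_q^{k+t-s}$, is an $\mathbb{F}_q$-linear subspace. *)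

theory Defs
  imports Main "HOL-Library.FuncSet"
begin

text \<open>Rows of an array with k+1 columns are encoded as lists: the first k entries
are the entries in the first k columns (symbols from the field), and the last column
(with entries in F_q^(t-s)) is encoded by the remaining t-s list entries, so a row is a
vector of F_q^(k+t-s). Since an OA has no repeated rows, the array is its set of rows.\<close>

definition AOA_rows :: "nat \<Rightarrow> nat \<Rightarrow> nat \<Rightarrow> ('a::finite) list set \<Rightarrow> bool" where
  "AOA_rows s t k R \<longleftrightarrow>
     1 \<le> s \<and> s \<le> t \<and> t \<le> k \<and>
     R \<subseteq> {r. length r = k + (t - s)} \<and>
     card R = card (UNIV :: 'a set) ^ t \<and>
     (\<forall>C. C \<subseteq> {..<k} \<and> card C = t \<longrightarrow>
        bij_betw (\<lambda>r. restrict (\<lambda>i. r ! i) C) R (PiE C (\<lambda>_. UNIV))) \<and>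
     (\<forall>C. C \<subseteq> {..<k} \<and> card C = s \<longrightarrow>
        bij_betw (\<lambda>r. (restrict (\<lambda>i. r ! i) C, drop k r)) R
          (PiE C (\<lambda>_. UNIV) \<times> {ys. length ys = t - s}))"

definition linear_AOA :: "nat \<Rightarrow> nat \<Rightarrow> nat \<Rightarrow> ('a::{finite,field}) list set \<Rightarrow> bool" where
  "linear_AOA s t k R \<longleftrightarrow>
     AOA_rows s t k R \<and>
     replicate (k + (t - s)) 0 \<in> R \<and>
     (\<forall>a\<in>R. \<forall>b\<in>R. map2 (+) a b \<in> R) \<and>
     (\<forall>c. \<forall>a\<in>R. map ((*) c) a \<in> R)"

end

theory Submission
  imports Defs
begin

text \<open>With \<open>n = k - 1\<close>, the rows are the images of the linear map
  \<open>x \<mapsto> (x\<^sub>0, \<dots>, x\<^sub>n\<^sub>-\<^sub>1, \<Sum>x\<^sub>j; c x\<^sub>0 - x\<^sub>n\<^sub>-\<^sub>1, \<dots>, c x\<^sub>n\<^sub>-\<^sub>2 - x\<^sub>n\<^sub>-\<^sub>1)\<close>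
  on \<open>F\<^sub>q\<^sup>n\<close>, for a scalar \<open>c \<notin> {0, -(n-1)}\<close>; such a \<open>c\<close> exists because \<open>q > 2\<close>.
  There are \<open>q\<^sup>n\<close> rows, as many as in each target of the required bijections, so by
  linearity it suffices that a vector \<open>x\<close> whose image vanishes on the relevant coordinates is
  zero. On \<open>n\<close> of the first \<open>n + 1\<close> columns the one missing coordinate is recovered from
  the sum. If the last column vanishes, then \<open>c x\<^sub>j = x\<^sub>n\<^sub>-\<^sub>1\<close> for all \<open>j < n - 1\<close>, and any
  single further column forces \<open>x\<^sub>n\<^sub>-\<^sub>1 = 0\<close>; for the sum column this is because
  \<open>c \<Sum>x\<^sub>j = (c + n - 1) x\<^sub>n\<^sub>-\<^sub>1\<close>.\<close>

lemma bij_betw_if_inj_on_card_eq: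
  assumes "inj_on f A" "f ` A \<subseteq> B" "finite B" "card A = card B"
  shows "bij_betw f A B"
  using assms by (simp add: bij_betw_def card_image card_subset_eq)

locale aoa_construction =
  fixes c :: "'a::field" and n :: nat
  assumes c_nonzero: "c \<noteq> 0"
    and c_plus_nonzero: "c + of_nat (n - 1) \<noteq> 0"
    and n_ge_2: "n \<ge> 2"
begin

definition entry :: "(nat \<Rightarrow> 'a) \<Rightarrow> nat \<Rightarrow> 'a" where
  "entry x i =
     (if i < n then x i
      else if i = n then (\<Sum>j<n. x j)
      else c * x (i - Suc n) - x (n - 1))"

definition codeword :: "(nat \<Rightarrow> 'a) \<Rightarrow> 'a list" where
  "codeword x = map (entry x) [0..<2 * n]"

definition code :: "'a list set" where
  "code = range codeword"

lemma length_codeword [simp]: "length (codeword x) = 2 * n"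
  by (simp add: codeword_def)

lemma nth_codeword [simp]: "i < 2 * n \<Longrightarrow> codeword x ! i = entry x i"
  by (simp add: codeword_def)

lemma drop_codeword: "drop (Suc n) (codeword x) = map (\<lambda>j. c * x j - x (n - 1)) [0..<n - 1]"
  by (rule nth_equalityI) (auto simp: entry_def)

lemma entry_diff: "entry (\<lambda>j. x j - y j) i = entry x i - entry y i"
  by (simp add: entry_def sum_subtractf algebra_simps)

lemma codeword_add: "map2 (+) (codeword x) (codeword y) = codeword (\<lambda>j. x j + y j)"
  by (rule nth_equalityI) (auto simp: entry_def sum.distrib algebra_simps)

lemma codeword_scale: "map ((*) d) (codeword x) = codeword (\<lambda>j. d * x j)"
  by (rule nth_equalityI) (auto simp: entry_def sum_distrib_left algebra_simps)

lemma codeword_zero: "codeword (\<lambda>_. 0) = replicate (2 * n) 0"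
  by (rule nth_equalityI) (auto simp: entry_def)

lemma codeword_eq_iff: "codeword x = codeword y \<longleftrightarrow> (\<forall>j<n. x j = y j)"
proof
  assume eq: "codeword x = codeword y"
  show "\<forall>j<n. x j = y j"
  proof (intro allI impI)
    fix j assume "j < n"
    then show "x j = y j" using arg_cong[OF eq, of "\<lambda>r. r ! j"] by (simp add: entry_def)
  qed
next
  assume "\<forall>j<n. x j = y j"
  then show "codeword x = codeword y"
    by (simp add: codeword_def entry_def)
qed

lemma vanishing_on_n_columns:
  assumes C: "C \<subseteq> {..<Suc n}" "card C = n" and zero: "\<forall>i\<in>C. entry x i = 0"
  shows "\<forall>j<n. x j = 0"
proof -
  have "card ({..<Suc n} - C) = 1"
    using C by (simp add: card_Diff_subset finite_subset)
  then obtain m where "{..<Suc n} - C = {m}"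
    by (meson card_1_singletonE)
  then have m: "m < Suc n" and C_eq: "C = {..<Suc n} - {m}"
    using C by auto
  have others: "x j = 0" if "j < n" "j \<noteq> m" for j
  proof -
    have "entry x j = 0" using zero that by (simp add: C_eq)
    then show ?thesis using \<open>j < n\<close> by (simp add: entry_def)
  qed
  show ?thesis
  proof (cases "m = n")
    case False
    then have "m < n" "n \<in> C" using m by (auto simp: C_eq)
    have "0 = (\<Sum>j<n. x j)" using zero \<open>n \<in> C\<close> by (auto simp: entry_def)
    also have "\<dots> = x m + (\<Sum>j\<in>{..<n} - {m}. x j)"
      using \<open>m < n\<close> by (simp add: sum.remove)
    also have "(\<Sum>j\<in>{..<n} - {m}. x j) = 0"
      using others by (intro sum.neutral) auto
    finally show ?thesis using others by auto
  qed (use others in auto)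
qed

lemma vanishing_on_column_and_last:
  assumes i: "i < Suc n" and zero: "entry x i = 0"
    and last: "\<forall>j<n - 1. c * x j = x (n - 1)"
  shows "\<forall>j<n. x j = 0"
proof -
  have last_zero: "x (n - 1) = 0"
  proof -
    consider "i < n - 1" | "i = n - 1" | "i = n" using i by linarith
    then show ?thesis
    proof cases
      case 1
      then have "x i = 0" using zero by (simp add: entry_def split: if_splits)
      then show ?thesis using last 1 by force
    next
      case 2
      then show ?thesis using zero n_ge_2 by (simp add: entry_def)
    next
      case 3
      have n_eq: "n = Suc (n - 1)" using n_ge_2 by simp
      have "0 = c * (\<Sum>j<n. x j)" using zero 3 by (simp add: entry_def)
      also have "\<dots> = (\<Sum>j<n - 1. c * x j) + c * x (n - 1)"
        by (subst n_eq) (simp add: sum_distrib_left distrib_left)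
      also have "\<dots> = (c + of_nat (n - 1)) * x (n - 1)"
        using last by (simp add: algebra_simps)
      finally show ?thesis using c_plus_nonzero by simp
    qed
  qed
  show ?thesis
  proof (intro allI impI)
    fix j assume "j < n"
    then consider "j < n - 1" | "j = n - 1" by linarith
    then show "x j = 0"
      using last last_zero c_nonzero by cases simp_all
  qed
qed

lemma inj_on_codeI:
  assumes "\<And>x y. f (codeword x) = f (codeword y) \<Longrightarrow> \<forall>j<n. x j = y j"
  shows "inj_on f code"
  using assms by (auto intro!: inj_onI simp: code_def codeword_eq_iff)

lemma inj_on_restrict_n_columns:
  assumes C: "C \<subseteq> {..<Suc n}" "card C = n"
  shows "inj_on (\<lambda>r. restrict (\<lambda>i. r ! i) C) code"
proof (rule inj_on_codeI)
  fix x y assume eq: "restrict (\<lambda>i. codeword x ! i) C = restrict (\<lambda>i. codeword y ! i) C"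
  have "entry (\<lambda>j. x j - y j) i = 0" if "i \<in> C" for i
  proof -
    have "i < 2 * n" using that C n_ge_2 by auto
    then show ?thesis using fun_cong[OF eq, of i] that by (simp add: entry_diff)
  qed
  then have "\<forall>j<n. x j - y j = 0" using vanishing_on_n_columns[OF C] by blast
  then show "\<forall>j<n. x j = y j" by simp
qed

lemma inj_on_column_and_last:
  assumes i: "i < Suc n"
  shows "inj_on (\<lambda>r. (restrict (\<lambda>j. r ! j) {i}, drop (Suc n) r)) code"
proof (rule inj_on_codeI)
  fix x y
  assume eq: "(restrict (\<lambda>j. codeword x ! j) {i}, drop (Suc n) (codeword x)) =
    (restrict (\<lambda>j. codeword y ! j) {i}, drop (Suc n) (codeword y))"
  have "i < 2 * n" using i n_ge_2 by simp
  then have "entry (\<lambda>j. x j - y j) i = 0"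
    using fun_cong[OF arg_cong[OF eq, of fst], of i] by (simp add: entry_diff)
  moreover have "\<forall>j<n - 1. c * (x j - y j) = x (n - 1) - y (n - 1)"
    using arg_cong[OF eq, of snd] by (simp add: drop_codeword map_eq_conv algebra_simps)
  ultimately have "\<forall>j<n. x j - y j = 0" using vanishing_on_column_and_last[OF i] by blast
  then show "\<forall>j<n. x j = y j" by simp
qed

end

locale finite_aoa_construction = aoa_construction c n for c :: "'a::{finite,field}" and n
begin

lemma card_code: "card code = card (UNIV :: 'a set) ^ n"
proof -
  have "code = codeword ` PiE {..<n} (\<lambda>_. UNIV)"
  proof
    show "code \<subseteq> codeword ` PiE {..<n} (\<lambda>_. UNIV)"
    proof
      fix r assume "r \<in> code"
      then obtain x where "r = codeword x" by (auto simp: code_def)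
      then have "r = codeword (restrict x {..<n})" by (simp add: codeword_eq_iff)
      moreover have "restrict x {..<n} \<in> PiE {..<n} (\<lambda>_. UNIV)" by simp
      ultimately show "r \<in> codeword ` PiE {..<n} (\<lambda>_. UNIV)" by (rule image_eqI)
    qed
  qed (unfold code_def, blast)
  moreover have "inj_on codeword (PiE {..<n} (\<lambda>_. UNIV))"
  proof (rule inj_onI)
    fix x y assume "x \<in> PiE {..<n} (\<lambda>_. UNIV)" "y \<in> PiE {..<n} (\<lambda>_. UNIV)"
      and "codeword x = codeword y"
    then show "x = y" by (intro PiE_ext) (auto simp: codeword_eq_iff)
  qed
  ultimately show ?thesis by (simp add: card_image card_PiE)
qed

lemma linear_AOA_code: "linear_AOA 1 n (Suc n) code"
  unfolding linear_AOA_def AOA_rows_def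
proof (intro conjI allI impI ballI)
  show "1 \<le> (1::nat)" "1 \<le> n" "n \<le> Suc n" using n_ge_2 by auto
  have length_eq: "Suc n + (n - 1) = 2 * n" using n_ge_2 by simp
  show "code \<subseteq> {r. length r = Suc n + (n - 1)}"
    unfolding length_eq code_def by auto
  show "card code = card (UNIV :: 'a set) ^ n" by (rule card_code)
  show "replicate (Suc n + (n - 1)) 0 \<in> code"
    unfolding length_eq code_def by (metis codeword_zero rangeI)
next
  fix a b assume "a \<in> code" "b \<in> code"
  then show "map2 (+) a b \<in> code" by (auto simp: code_def codeword_add)
next
  fix d a assume "a \<in> code"
  then show "map ((*) d) a \<in> code" by (auto simp: code_def codeword_scale)
next
  fix C assume C: "C \<subseteq> {..<Suc n} \<and> card C = n"
  then have "finite C" using finite_subset by blast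
  show "bij_betw (\<lambda>r. restrict (\<lambda>i. r ! i) C) code (PiE C (\<lambda>_. UNIV))"
  proof (rule bij_betw_if_inj_on_card_eq)
    show "inj_on (\<lambda>r. restrict (\<lambda>i. r ! i) C) code"
      using C by (intro inj_on_restrict_n_columns) auto
    show "(\<lambda>r. restrict (\<lambda>i. r ! i) C) ` code \<subseteq> PiE C (\<lambda>_. UNIV)"
      by (rule image_subsetI) simp
    show "finite (PiE C (\<lambda>_. UNIV :: 'a set))"
      using \<open>finite C\<close> by (rule finite_PiE) simp
    show "card code = card (PiE C (\<lambda>_. UNIV :: 'a set))"
      using C \<open>finite C\<close> by (simp add: card_code card_PiE)
  qed
next
  fix C assume C: "C \<subseteq> {..<Suc n} \<and> card C = 1"
  then obtain i where i: "C = {i}" "i < Suc n" by (auto simp: card_1_singleton_iff)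
  show "bij_betw (\<lambda>r. (restrict (\<lambda>i. r ! i) C, drop (Suc n) r)) code
          (PiE C (\<lambda>_. UNIV) \<times> {ys. length ys = n - 1})"
  proof (rule bij_betw_if_inj_on_card_eq)
    show "inj_on (\<lambda>r. (restrict (\<lambda>i. r ! i) C, drop (Suc n) r)) code"
      using i by (simp add: inj_on_column_and_last)
    show "(\<lambda>r. (restrict (\<lambda>i. r ! i) C, drop (Suc n) r)) ` code
            \<subseteq> PiE C (\<lambda>_. UNIV) \<times> {ys. length ys = n - 1}"
      by (rule image_subsetI) (auto simp: code_def)
    show "finite (PiE C (\<lambda>_. UNIV :: 'a set) \<times> {ys :: 'a list. length ys = n - 1})"
      using finite_lists_length_eq[of "UNIV :: 'a set" "n - 1"] i
      by (intro finite_cartesian_product finite_PiE) auto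
    have "card (UNIV :: 'a set) * card (UNIV :: 'a set) ^ (n - 1) = card (UNIV :: 'a set) ^ n"
      using n_ge_2 by (simp flip: power_Suc)
    then show "card code = card (PiE C (\<lambda>_. UNIV :: 'a set) \<times> {ys :: 'a list. length ys = n - 1})"
      using card_lists_length_eq[of "UNIV :: 'a set" "n - 1"] i
      by (simp add: card_code card_PiE card_cartesian_product)
  qed
qed

end

lemma ex_distinct_from_two:
  assumes "card (UNIV :: 'a::finite set) > 2"
  shows "\<exists>c :: 'a. c \<noteq> a \<and> c \<noteq> b"
proof (rule ccontr)
  assume "\<not> ?thesis"
  then have "card (UNIV :: 'a set) \<le> card {a, b}" by (intro card_mono) auto
  also have "\<dots> \<le> 2" by (simp add: card_insert_if)
  finally show False using assms by simp
qed

theorem theorem3p6: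
  fixes k :: nat
  assumes "card (UNIV :: ('a::{finite,field}) set) > 2"
    and "k \<ge> 3"
  shows "\<exists>R :: 'a list set. linear_AOA 1 (k - 1) k R"
proof -
  define n where "n = k - 1"
  have k_eq: "k = Suc n" and "n \<ge> 2" using assms(2) by (auto simp: n_def)
  obtain c :: 'a where "c \<noteq> 0" and "c \<noteq> - of_nat (n - 1)"
    using ex_distinct_from_two[OF assms(1)] by blast
  then have "c + of_nat (n - 1) \<noteq> 0" by (simp add: eq_neg_iff_add_eq_0)
  then have "finite_aoa_construction c n"
    using \<open>c \<noteq> 0\<close> \<open>n \<ge> 2\<close> by unfold_locales
  then have "linear_AOA 1 n (Suc n) (aoa_construction.code c n)"
    by (rule finite_aoa_construction.linear_AOA_code)
  then show ?thesis by (auto simp: k_eq)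
qed
end
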